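(* Let $H\Gamma=(C,\{\mathcal W,\mathcal X,\mathcal Y,\mathcal Z\},G_{zx},G_{wy})$ be a Lagrangian hypercube diagram and $L$ the embedded Legendrian torus obtained as the lift of the Lagrangian torus it determines, with $H_1(L)=\langle\tilde\gamma_{zx},\tilde\gamma_{wy}\rangle$. Then for $A=a[\tilde\gamma_{zx}]+b[\tilde\gamma_{wy}]\in H_1(L)$, $(a,b)\in\mathbb{Z}^2$, the Maslov index is $$\mu(A)=2a\,w(G_{zx})+2b\,w(G_{wy}),$$ where $w(G)=\frac14(\#\text{counterclockwise corners of }G-\#\text{clockwise corners of }G)$.
   Context: Grid conventions. In a plane with coordinates $(a,b)$ (below $(a,b)=(w,y)$ or $(a,b)=(z,x)$), an immersed grid diagram of size $n$ is an $n\times n$ grid of unit cells in $[0,n]^2$ with two kinds of markings at centers of cells, each row and each column containing exactly one marking of each kind; joining each marking of the first kind to the marking of the second kind in its row by an $a$-parallel segment, and each marking of the second kind to the marking of the first kind in its column by a $b$-parallel segment, gives an oriented connected closed piecewise-linear curve, with no crossing information recorded, viewed as an immersion $\gamma:\mathbb{R}/2\pi\mathbb{Z}\to\mathbb{R}^2$, $\theta\mapsto(a(\theta),b(\theta))$. It is a Lagrangian grid diagram if (1) $\int_0^{2\pi}b\,a'\,d\theta=0$ and (2) $\int_{\theta_0}^{\theta_1}b\,a'\,d\theta\neq0$ whenever $\theta_0\neq\theta_1$ and $\gamma(\theta_0)=\gamma(\theta_1)$. For a crossing $c=\gamma(\theta_0)=\gamma(\theta_1)$ put $|\Delta t(c)|=|\int_{\theta_0}^{\theta_1}b\,a'\,d\theta|$.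 The corners are the markings; a corner is counterclockwise (resp. clockwise) if the curve turns left (resp. right) there relative to the orientation of the $(a,b)$-plane. Hypercube diagrams. Let $C=[0,n]^4$ with coordinates $(w,x,y,z)$. A flat is a product in which two coordinates range over $[0,n]$ and the other two over unit intervals $[k,k+1]$, named by its two full coordinates; a cube is a product in which three coordinates range over $[0,n]$ and one over a unit interval. Markings are points with coordinates in $\mathbb{Z}+\frac12$ labelled $W,X,Y,Z$. Marking conditions: each cube contains exactly one marking of each label; each cube contains exactly two flats containing exactly three markings; in each such flat the three markings form a right angle with rays parallel to coordinate axes; its vertex is $W$ iff the flat is a $zw$-flat, $X$ iff a $wx$-flat, $Y$ iff an $xy$-flat, $Z$ iff a $yz$-flat. Join each $W$ to an $X$ by a $w$-parallel segment, each $X$ to a $Y$ by an $x$-parallel segment, each $Y$ to a $Z$ by a $y$-parallel segment and each $Z$ to a $W$ by a $z$-parallel segment; the projections of this oriented curve to the $(w,y)$- and $(z,x)$-planes are immersed grid diagrams $G_{wy}$ ($(a,b)=(w,y)$) and $G_{zx}$ ($(a,b)=(z,x)$). $H\Gamma$ is a Lagrangian hypercube diagram if the marking conditions hold, $G_{wy},G_{zx}$ are Lagrangian grid diagrams, and $|\Delta t(c)|\neq|\Delta t(c')|$ for all crossings $c$ of $G_{zx}$ and $c'$ of $G_{wy}$. Torus and lift. With $G_{zx}$ parametrized by $s\mapsto(z(s),x(s))$ and $G_{wy}$ by $u\mapsto(w(u),y(u))$ (corners slightly smoothed preserving (1),(2)), the torus is $i(s,u)=(w(u),x(s),y(u),z(s))$,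 Lagrangian for $\omega=dw\wedge dy+dz\wedge dx$, with loops $\gamma_{zx}=S^1\times\{1\}$, $\gamma_{wy}=\{1\}\times S^1$. In $\mathbb{R}^5$ with coordinates $(w,x,y,z,t)$ and contact form $dt-y\,dw-x\,dz$, the lift is $L=\{(i(p),t(p))\}$, $t(p)=t_0+\int_\gamma(y\,dw+x\,dz)$ along a path $\gamma$ from a base point to $p$; $\tilde\gamma_{zx},\tilde\gamma_{wy}$ are the lifts of the loops. The Maslov index $\mu:H_1(L)\to\mathbb{Z}$ assigns to a loop the Maslov index of the loop of (unoriented) Lagrangian tangent planes of $i$ along its projection, in the Lagrangian Grassmannian of $(\mathbb{R}^4,\omega)$. *)

theory Defs
  imports "HOL-Complex_Analysis.Complex_Analysis"
begin

text \<open>A cell of the hypercube [0,n]^4 is given by integer indices (w,x,y,z); the marking sits at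
  the centre (w+1/2, x+1/2, y+1/2, z+1/2).  Coordinate 0 = w, 1 = x, 2 = y, 3 = z.
  Labels: 0 = W, 1 = X, 2 = Y, 3 = Z.\<close>

type_synonym cell4 = "nat \<times> nat \<times> nat \<times> nat"

definition coord :: "cell4 \<Rightarrow> nat \<Rightarrow> nat" where
  "coord p j = (if j = 0 then fst p else if j = 1 then fst (snd p)
               else if j = 2 then fst (snd (snd p)) else snd (snd (snd p)))"

text \<open>The oriented closed curve of the hypercube diagram is given as a cyclic list
  W_0, X_0, Y_0, Z_0, W_1, X_1, ... of length 4n; the markings with label l are the entries at
  positions congruent to l mod 4.\<close>

definition hc_marks :: "cell4 list \<Rightarrow> nat \<Rightarrow> cell4 set" where
  "hc_marks cyc l = {cyc ! (4 * i + l) | i. i < length cyc div 4}"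

definition labelled_marks :: "cell4 list \<Rightarrow> (nat \<times> cell4) set" where
  "labelled_marks cyc = {(l, p). l < 4 \<and> p \<in> hc_marks cyc l}"

definition differ_in_one :: "cell4 \<Rightarrow> cell4 \<Rightarrow> nat \<Rightarrow> bool" where
  "differ_in_one v q i \<longleftrightarrow> coord v i \<noteq> coord q i \<and> (\<forall>j<4. j \<noteq> i \<longrightarrow> coord v j = coord q j)"

definition flat_marks :: "cell4 list \<Rightarrow> nat \<Rightarrow> nat \<Rightarrow> nat \<Rightarrow> nat \<Rightarrow> (nat \<times> cell4) set" where
  "flat_marks cyc j1 k1 j2 k2 =
     {(l, p) \<in> labelled_marks cyc. coord p j1 = k1 \<and> coord p j2 = k2}"

text \<open>Label of the vertex of the right angle in a flat with fixed coordinates j1 < j2: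
  zw-flat (x,y fixed) -> W, wx-flat (y,z fixed) -> X, xy-flat (w,z fixed) -> Y,
  yz-flat (w,x fixed) -> Z; other flats: none.\<close>
definition vertex_label :: "nat \<Rightarrow> nat \<Rightarrow> nat option" where
  "vertex_label j1 j2 =
     (if (j1, j2) = (1, 2) then Some 0
      else if (j1, j2) = (2, 3) then Some 1
      else if (j1, j2) = (0, 3) then Some 2
      else if (j1, j2) = (0, 1) then Some 3 else None)"

definition marking_conditions :: "nat \<Rightarrow> cell4 list \<Rightarrow> bool" where
  "marking_conditions n cyc \<longleftrightarrow>
     \<comment> \<open>each cube contains exactly one marking of each label\<close>
     (\<forall>j<4. \<forall>k<n. \<forall>l<4. card {p \<in> hc_marks cyc l. coord p j = k} = 1) \<and>
     \<comment> \<open>each cube contains exactly two flats containing exactly three markings\<close>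
     (\<forall>j<4. \<forall>k<n.
        card {(i, m). i < 4 \<and> i \<noteq> j \<and> m < n \<and> card (flat_marks cyc j k i m) = 3} = 2) \<and>
     \<comment> \<open>in each such flat the markings form a right angle with axis-parallel rays,
         vertex label determined by the type of the flat\<close>
     (\<forall>j1 j2 k1 k2. j1 < j2 \<and> j2 < 4 \<and> k1 < n \<and> k2 < n \<and>
        card (flat_marks cyc j1 k1 j2 k2) = 3 \<longrightarrow>
        (\<exists>lv v lq q lr r i i'. vertex_label j1 j2 = Some lv \<and>
           flat_marks cyc j1 k1 j2 k2 = {(lv, v), (lq, q), (lr, r)} \<and>
           differ_in_one v q i \<and> differ_in_one v r i' \<and> i \<noteq> i'))"

text \<open>Joining: W_i to X_i by a w-parallel segment, X_i to Y_i x-parallel, Y_i to Z_i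
  y-parallel, Z_i to W_(i+1) z-parallel.\<close>
definition joining_conditions :: "cell4 list \<Rightarrow> bool" where
  "joining_conditions cyc \<longleftrightarrow>
     (\<forall>k < length cyc. differ_in_one (cyc ! k) (cyc ! ((k + 1) mod length cyc)) (k mod 4))"

text \<open>An immersed grid diagram is given by the cyclic list of its corners (cell indices
  (a,b)); even positions are markings of the first kind, odd positions of the second kind;
  the edge from an even to the next odd corner is a-parallel, from an odd to the next even
  corner b-parallel.\<close>

definition immersed_grid :: "nat \<Rightarrow> (nat \<times> nat) list \<Rightarrow> bool" where
  "immersed_grid n vs \<longleftrightarrow> length vs = 2 * n \<and> n \<ge> 1 \<and>
     (\<forall>q\<in>set vs. fst q < n \<and> snd q < n) \<and>
     (\<forall>k < 2 * n. even k \<longrightarrow>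
         snd (vs ! k) = snd (vs ! ((k + 1) mod (2 * n))) \<and> fst (vs ! k) \<noteq> fst (vs ! ((k + 1) mod (2 * n)))) \<and>
     (\<forall>k < 2 * n. odd k \<longrightarrow>
         fst (vs ! k) = fst (vs ! ((k + 1) mod (2 * n))) \<and> snd (vs ! k) \<noteq> snd (vs ! ((k + 1) mod (2 * n)))) \<and>
     (\<forall>r < n. card {k. k < 2 * n \<and> even k \<and> snd (vs ! k) = r} = 1 \<and>
              card {k. k < 2 * n \<and> even k \<and> fst (vs ! k) = r} = 1 \<and>
              card {k. k < 2 * n \<and> odd k \<and> snd (vs ! k) = r} = 1 \<and>
              card {k. k < 2 * n \<and> odd k \<and> fst (vs ! k) = r} = 1)"

definition corner_pt :: "nat \<times> nat \<Rightarrow> real \<times> real" where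
  "corner_pt q = (real (fst q) + 1/2, real (snd q) + 1/2)"

definition pl_param :: "(nat \<times> nat) list \<Rightarrow> real \<Rightarrow> real \<times> real" where
  "pl_param vs \<theta> =
     (let m = length vs; \<tau> = \<theta> * real m / (2 * pi); k = \<lfloor>\<tau>\<rfloor>; f = \<tau> - real_of_int k;
          i = nat (k mod int m)
      in (1 - f) *\<^sub>R corner_pt (vs ! i) + f *\<^sub>R corner_pt (vs ! ((i + 1) mod m)))"

definition action :: "(real \<Rightarrow> real \<times> real) \<Rightarrow> real \<Rightarrow> real \<Rightarrow> real" where
  "action \<gamma> \<theta>0 \<theta>1 =
     integral {\<theta>0..\<theta>1} (\<lambda>\<theta>. snd (\<gamma> \<theta>) * fst (vector_derivative \<gamma> (at \<theta>)))"

definition crossings :: "(real \<Rightarrow> real \<times> real) \<Rightarrow> (real \<times> real) set" where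
  "crossings \<gamma> = {(\<theta>0, \<theta>1). 0 \<le> \<theta>0 \<and> \<theta>0 < \<theta>1 \<and> \<theta>1 < 2 * pi \<and> \<gamma> \<theta>0 = \<gamma> \<theta>1}"

definition lagrangian_curve :: "(real \<Rightarrow> real \<times> real) \<Rightarrow> bool" where
  "lagrangian_curve \<gamma> \<longleftrightarrow> action \<gamma> 0 (2 * pi) = 0 \<and>
     (\<forall>c\<in>crossings \<gamma>. action \<gamma> (fst c) (snd c) \<noteq> 0)"

definition lagrangian_grid :: "nat \<Rightarrow> (nat \<times> nat) list \<Rightarrow> bool" where
  "lagrangian_grid n vs \<longleftrightarrow> immersed_grid n vs \<and> lagrangian_curve (pl_param vs)"

definition dir_in :: "(nat \<times> nat) list \<Rightarrow> nat \<Rightarrow> real \<times> real" where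
  "dir_in vs k = corner_pt (vs ! k) - corner_pt (vs ! ((k + length vs - 1) mod length vs))"

definition dir_out :: "(nat \<times> nat) list \<Rightarrow> nat \<Rightarrow> real \<times> real" where
  "dir_out vs k = corner_pt (vs ! ((k + 1) mod length vs)) - corner_pt (vs ! k)"

definition turn :: "(nat \<times> nat) list \<Rightarrow> nat \<Rightarrow> real" where
  "turn vs k = fst (dir_in vs k) * snd (dir_out vs k) - snd (dir_in vs k) * fst (dir_out vs k)"

definition ccw_corners :: "(nat \<times> nat) list \<Rightarrow> nat" where
  "ccw_corners vs = card {k. k < length vs \<and> turn vs k > 0}"

definition cw_corners :: "(nat \<times> nat) list \<Rightarrow> nat" where
  "cw_corners vs = card {k. k < length vs \<and> turn vs k < 0}"

definition wG :: "(nat \<times> nat) list \<Rightarrow> real" where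
  "wG vs = (real (ccw_corners vs) - real (cw_corners vs)) / 4"

definition wy_proj :: "cell4 \<Rightarrow> nat \<times> nat" where "wy_proj p = (coord p 0, coord p 2)"
definition zx_proj :: "cell4 \<Rightarrow> nat \<times> nat" where "zx_proj p = (coord p 3, coord p 1)"

text \<open>G_wy: corners W_0, X_0, W_1, X_1, ... (W first kind).  G_zx: corners Y_0, W_1, Y_1, W_2, ...
  (Y = Z in the zx-projection are of the first kind, W = X of the second kind).\<close>
definition G_wy :: "cell4 list \<Rightarrow> (nat \<times> nat) list" where
  "G_wy cyc = concat (map (\<lambda>i. [wy_proj (cyc ! (4 * i)), wy_proj (cyc ! (4 * i + 1))])
                          [0..<length cyc div 4])"

definition G_zx :: "cell4 list \<Rightarrow> (nat \<times> nat) list" where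
  "G_zx cyc = concat (map (\<lambda>i. [zx_proj (cyc ! (4 * i + 2)),
                                 zx_proj (cyc ! ((4 * i + 4) mod length cyc))])
                          [0..<length cyc div 4])"

definition lagrangian_hypercube :: "nat \<Rightarrow> cell4 list \<Rightarrow> bool" where
  "lagrangian_hypercube n cyc \<longleftrightarrow>
     n \<ge> 1 \<and> length cyc = 4 * n \<and> (\<forall>p\<in>set cyc. \<forall>j<4. coord p j < n) \<and>
     marking_conditions n cyc \<and> joining_conditions cyc \<and>
     lagrangian_grid n (G_wy cyc) \<and> lagrangian_grid n (G_zx cyc) \<and>
     (\<forall>c\<in>crossings (pl_param (G_zx cyc)). \<forall>c'\<in>crossings (pl_param (G_wy cyc)).
        \<bar>action (pl_param (G_zx cyc)) (fst c) (snd c)\<bar> \<noteq>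
        \<bar>action (pl_param (G_wy cyc)) (fst c') (snd c')\<bar>)"

text \<open>A slight smoothing of the grid curve: a 2pi-periodic C^1 immersion that coincides with the
  piecewise-linear parametrization outside the delta-windows around the corner times
  2 pi k / m, inside the window around corner k its velocity is a nonnegative combination of
  the incoming and outgoing edge directions (the corner is rounded off), and which still
  satisfies conditions (1) and (2).\<close>
definition smoothing :: "(nat \<times> nat) list \<Rightarrow> (real \<Rightarrow> real \<times> real) \<Rightarrow> bool" where
  "smoothing vs g \<longleftrightarrow>
     (\<forall>\<theta>. g (\<theta> + 2 * pi) = g \<theta>) \<and>
     (\<forall>\<theta>. g differentiable (at \<theta>)) \<and>
     continuous_on UNIV (\<lambda>\<theta>. vector_derivative g (at \<theta>)) \<and>
     (\<forall>\<theta>. vector_derivative g (at \<theta>) \<noteq> 0) \<and>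
     (\<exists>\<delta>>0. \<delta> < pi / real (length vs) \<and>
        (\<forall>\<theta>. (\<forall>k::int. \<bar>\<theta> - 2 * pi * real_of_int k / real (length vs)\<bar> \<ge> \<delta>)
               \<longrightarrow> g \<theta> = pl_param vs \<theta>) \<and>
        (\<forall>k::int. \<forall>\<theta>. \<bar>\<theta> - 2 * pi * real_of_int k / real (length vs)\<bar> < \<delta> \<longrightarrow>
           (\<exists>\<alpha> \<beta>. \<alpha> \<ge> 0 \<and> \<beta> \<ge> 0 \<and>
              vector_derivative g (at \<theta>) =
                \<alpha> *\<^sub>R dir_in vs (nat (k mod int (length vs))) +
                \<beta> *\<^sub>R dir_out vs (nat (k mod int (length vs)))))) \<and>
     lagrangian_curve g"

text \<open>R^4 with coordinates (w,x,y,z) and omega = dw/\dy + dz/\dx.\<close>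
type_synonym r4 = "real \<times> real \<times> real \<times> real"

text \<open>i(s,u) = (w(u), x(s), y(u), z(s)), where g_zx(s) = (z(s), x(s)), g_wy(u) = (w(u), y(u)).\<close>
definition torus_imm :: "(real \<Rightarrow> real \<times> real) \<Rightarrow> (real \<Rightarrow> real \<times> real) \<Rightarrow> real \<Rightarrow> real \<Rightarrow> r4" where
  "torus_imm gzx gwy s u = (fst (gwy u), snd (gzx s), snd (gwy u), fst (gzx s))"

text \<open>Complex coordinates compatible with omega: zeta1 = w + i y, zeta2 = z + i x
  (Darboux pairs (q1,p1) = (w,y), (q2,p2) = (z,x)).\<close>
definition zeta1 :: "r4 \<Rightarrow> complex" where
  "zeta1 v = Complex (fst v) (fst (snd (snd v)))"
definition zeta2 :: "r4 \<Rightarrow> complex" where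
  "zeta2 v = Complex (snd (snd (snd v))) (fst (snd v))"

definition lag_det :: "r4 \<Rightarrow> r4 \<Rightarrow> complex" where
  "lag_det v1 v2 = zeta1 v1 * zeta2 v2 - zeta2 v1 * zeta1 v2"

text \<open>For a basis (v1,v2) of a Lagrangian plane Lambda, with Lambda = U R^2 for U unitary,
  this equals det(U)^2 (independent of the basis, i.e. a function of the unoriented plane).\<close>
definition lag_rho :: "r4 \<Rightarrow> r4 \<Rightarrow> complex" where
  "lag_rho v1 v2 = (lag_det v1 v2)\<^sup>2 / complex_of_real ((cmod (lag_det v1 v2))\<^sup>2)"

text \<open>Maslov index of a loop (parameter t in [0,1]) of Lagrangian planes spanned by the
  frames (f1 t, f2 t): the degree (winding number about 0) of t -> det(U(t))^2.\<close>
definition maslov_index :: "(real \<Rightarrow> r4) \<Rightarrow> (real \<Rightarrow> r4) \<Rightarrow> complex" where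
  "maslov_index f1 f2 = winding_number (\<lambda>t. lag_rho (f1 t) (f2 t)) 0"

definition torus_ds :: "(real \<Rightarrow> real \<times> real) \<Rightarrow> (real \<Rightarrow> real \<times> real) \<Rightarrow> real \<times> real \<Rightarrow> r4" where
  "torus_ds gzx gwy su = vector_derivative (\<lambda>s. torus_imm gzx gwy s (snd su)) (at (fst su))"
definition torus_du :: "(real \<Rightarrow> real \<times> real) \<Rightarrow> (real \<Rightarrow> real \<times> real) \<Rightarrow> real \<times> real \<Rightarrow> r4" where
  "torus_du gzx gwy su = vector_derivative (\<lambda>u. torus_imm gzx gwy (fst su) u) (at (snd su))"

end

theory Submission
  imports Defs
begin

text \<open>The tangent plane of the product torus at (s,u) is spanned by (0, x'(s), 0, z'(s)) and
  (w'(u), 0, y'(u), 0), so its complex determinant is minus the product of the velocities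
  z' + i x' and w' + i y' of the two grid curves, and the square of its phase has argument
  twice the sum of continuous angle functions of the two velocities.  Along a smoothed grid
  curve the velocity is constant on the edges and turns monotonically through a right angle at
  each corner, by +pi/2 at counterclockwise and by -pi/2 at clockwise corners; hence its angle
  gains 2 pi w(G) per period, and a loop of class a gamma_zx + b gamma_wy changes the argument
  of the squared phase by 2 pi (2a w(G_zx) + 2b w(G_wy)).\<close>

definition complex_of_pair :: "real \<times> real \<Rightarrow> complex" where
  "complex_of_pair v = Complex (fst v) (snd v)"

lemma complex_of_pair_add: "complex_of_pair (u + v) = complex_of_pair u + complex_of_pair v"
  by (simp add: complex_of_pair_def complex_eq_iff)

lemma complex_of_pair_scaleR: "complex_of_pair (r *\<^sub>R v) = of_real r * complex_of_pair v"
  by (simp add: complex_of_pair_def complex_eq_iff)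

lemma complex_of_pair_eq_0_iff: "complex_of_pair v = 0 \<longleftrightarrow> v = 0"
  by (simp add: complex_of_pair_def complex_eq_iff prod_eq_iff)

lemma Re_complex_of_pair_mult_cnj:
  "Re (complex_of_pair u * cnj (complex_of_pair v)) = fst u * fst v + snd u * snd v"
  by (simp add: complex_of_pair_def)

lemma complex_of_pair_eq: "complex_of_pair v = of_real (fst v) + \<i> * of_real (snd v)"
  by (simp add: complex_of_pair_def complex_eq_iff)

lemma continuous_on_complex_of_pair:
  "continuous_on S f \<Longrightarrow> continuous_on S (\<lambda>x. complex_of_pair (f x))"
  unfolding complex_of_pair_eq by (intro continuous_intros)

lemma has_vector_derivative_fst_snd:
  assumes "(g has_vector_derivative D) (at s)"
  shows "((\<lambda>s. fst (g s)) has_vector_derivative fst D) (at s)"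
    and "((\<lambda>s. snd (g s)) has_vector_derivative snd D) (at s)"
  using has_derivative_fst[OF assms[unfolded has_vector_derivative_def]]
    has_derivative_snd[OF assms[unfolded has_vector_derivative_def]]
  by (simp_all add: has_vector_derivative_def)

lemma torus_ds_eq:
  assumes "gzx differentiable (at s)"
  shows "torus_ds gzx gwy (s, u) =
    (0, snd (vector_derivative gzx (at s)), 0, fst (vector_derivative gzx (at s)))"
proof -
  let ?D = "vector_derivative gzx (at s)"
  have "(gzx has_vector_derivative ?D) (at s)"
    using assms vector_derivative_works by blast
  then have "((\<lambda>s. torus_imm gzx gwy s u) has_vector_derivative (0, snd ?D, 0, fst ?D)) (at s)"
    unfolding torus_imm_def
    by (intro has_vector_derivative_Pair has_vector_derivative_fst_snd has_vector_derivative_const)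
  then show ?thesis unfolding torus_ds_def by (simp add: vector_derivative_at)
qed

lemma torus_du_eq:
  assumes "gwy differentiable (at u)"
  shows "torus_du gzx gwy (s, u) =
    (fst (vector_derivative gwy (at u)), 0, snd (vector_derivative gwy (at u)), 0)"
proof -
  let ?D = "vector_derivative gwy (at u)"
  have "(gwy has_vector_derivative ?D) (at u)"
    using assms vector_derivative_works by blast
  then have "((\<lambda>u. torus_imm gzx gwy s u) has_vector_derivative (fst ?D, 0, snd ?D, 0)) (at u)"
    unfolding torus_imm_def
    by (intro has_vector_derivative_Pair has_vector_derivative_fst_snd has_vector_derivative_const)
  then show ?thesis unfolding torus_du_def by (simp add: vector_derivative_at)
qed

lemma lag_det_product_frame:
  "lag_det (0, x, 0, z) (w, 0, y, 0) = - (complex_of_pair (z, x) * complex_of_pair (w, y))"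
  by (simp add: lag_det_def zeta1_def zeta2_def complex_of_pair_def complex_eq_iff)

lemma lag_rho_eq_exp:
  assumes "lag_det v1 v2 = - exp w"
  shows "lag_rho v1 v2 = exp (\<i> * of_real (2 * Im w))"
proof -
  have "(- exp w)\<^sup>2 = exp (2 * w)"
    by (simp add: power2_eq_square mult_exp_exp)
  moreover have "of_real ((cmod (- exp w))\<^sup>2) = exp (of_real (2 * Re w))"
    by (simp add: power2_eq_square exp_add[symmetric] flip: exp_of_real)
  moreover have "2 * w - of_real (2 * Re w) = \<i> * of_real (2 * Im w)"
    by (simp add: complex_eq_iff)
  ultimately show ?thesis
    unfolding lag_rho_def assms by (metis exp_diff)
qed

lemma lag_rho_torus_frame:
  assumes "gzx differentiable (at s)" "gwy differentiable (at u)"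
    and "complex_of_pair (vector_derivative gzx (at s)) = exp A"
    and "complex_of_pair (vector_derivative gwy (at u)) = exp B"
  shows "lag_rho (torus_ds gzx gwy (s, u)) (torus_du gzx gwy (s, u))
           = exp (\<i> * of_real (2 * (Im A + Im B)))"
proof -
  have "lag_det (torus_ds gzx gwy (s, u)) (torus_du gzx gwy (s, u)) = - exp (A + B)"
    using assms unfolding torus_ds_eq[OF assms(1)] torus_du_eq[OF assms(2)] lag_det_product_frame
    by (simp add: exp_add)
  then show ?thesis by (simp add: lag_rho_eq_exp)
qed

lemma winding_number_exp_angle:
  assumes "continuous_on {0..1} \<psi>"
  shows "winding_number (\<lambda>t. exp (\<i> * of_real (\<psi> t))) 0 = of_real ((\<psi> 1 - \<psi> 0) / (2 * pi))"
proof -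
  have "path (\<lambda>t. \<i> * of_real (\<psi> t))"
    unfolding path_def by (intro continuous_intros assms)
  moreover have "(\<i> * of_real (\<psi> 1) - \<i> * of_real (\<psi> 0)) / (2 * of_real pi * \<i>)
      = of_real ((\<psi> 1 - \<psi> 0) / (2 * pi))"
    by (simp add: field_simps)
  ultimately show ?thesis
    using winding_number_compose_exp by (simp add: o_def pathstart_def pathfinish_def)
qed

subsection \<open>Corners of a grid diagram\<close>

lemma immersed_grid_dir_out:
  assumes "immersed_grid n vs" "i < length vs"
  shows "even i \<Longrightarrow> snd (dir_out vs i) = 0 \<and> fst (dir_out vs i) \<noteq> 0"
    and "odd i \<Longrightarrow> fst (dir_out vs i) = 0 \<and> snd (dir_out vs i) \<noteq> 0"
  using assms unfolding immersed_grid_def dir_out_def corner_pt_def by auto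

lemma dir_in_eq_dir_out:
  fixes k :: int
  assumes "0 < length vs"
  shows "dir_in vs (nat (k mod int (length vs))) = dir_out vs (nat ((k - 1) mod int (length vs)))"
proof -
  let ?m = "length vs"
  define j where "j = nat (k mod int ?m)"
  define i where "i = nat ((k - 1) mod int ?m)"
  have "int ((i + 1) mod ?m) = ((k - 1) mod int ?m + 1) mod int ?m"
    using assms by (simp add: i_def zmod_int add.commute)
  also have "\<dots> = int j"
    using assms by (simp add: j_def mod_add_left_eq)
  finally have next_i: "(i + 1) mod ?m = j" by linarith
  have "int (j + ?m - 1) = k mod int ?m + int ?m - 1"
    using assms unfolding j_def by (subst of_nat_diff) (auto simp: Suc_le_eq)
  then have "int ((j + ?m - 1) mod ?m) = (k mod int ?m + int ?m - 1) mod int ?m"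
    by (simp add: zmod_int)
  also have "\<dots> = (k mod int ?m - 1 + int ?m) mod int ?m"
    by (simp add: algebra_simps)
  also have "\<dots> = int i"
    using assms by (simp add: i_def mod_diff_left_eq)
  finally have prev_j: "(j + ?m - 1) mod ?m = i" by linarith
  show ?thesis
    unfolding dir_in_def dir_out_def next_i prev_j j_def[symmetric] i_def[symmetric] ..
qed

lemma immersed_grid_corner:
  assumes grid: "immersed_grid n vs" and j: "j < length vs"
  shows "turn vs j \<noteq> 0"
    and "Re (complex_of_pair (dir_out vs j) * cnj (complex_of_pair (dir_in vs j))) = 0"
proof -
  let ?m = "length vs"
  have m: "?m = 2 * n" "0 < ?m" using grid by (auto simp: immersed_grid_def)
  define i where "i = nat ((int j - 1) mod int ?m)"
  have i: "i < ?m" using m by (simp add: i_def nat_less_iff)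
  have din: "dir_in vs j = dir_out vs i"
    using dir_in_eq_dir_out[OF m(2), of "int j"] j by (simp add: i_def)
  have parity: "even i \<longleftrightarrow> odd j"
  proof (cases j)
    case 0
    then have "i = ?m - 1" using m by (simp add: i_def zmod_minus1 nat_diff_distrib)
    then show ?thesis using m 0 by simp
  next
    case (Suc j')
    then have "i = j'" using j by (simp add: i_def)
    then show ?thesis using Suc by simp
  qed
  have out_j: "even j \<Longrightarrow> snd (dir_out vs j) = 0 \<and> fst (dir_out vs j) \<noteq> 0"
    "odd j \<Longrightarrow> fst (dir_out vs j) = 0 \<and> snd (dir_out vs j) \<noteq> 0"
    using immersed_grid_dir_out[OF grid j] by blast+
  have out_i: "even i \<Longrightarrow> snd (dir_out vs i) = 0 \<and> fst (dir_out vs i) \<noteq> 0"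
    "odd i \<Longrightarrow> fst (dir_out vs i) = 0 \<and> snd (dir_out vs i) \<noteq> 0"
    using immersed_grid_dir_out[OF grid i] by blast+
  show "turn vs j \<noteq> 0"
    unfolding turn_def din using out_i out_j parity by (cases "even j") auto
  show "Re (complex_of_pair (dir_out vs j) * cnj (complex_of_pair (dir_in vs j))) = 0"
    unfolding Re_complex_of_pair_mult_cnj din using out_i out_j parity by (cases "even j") auto
qed

lemma corner_cone:
  assumes "immersed_grid n vs" "j < length vs" "0 \<le> \<alpha>" "0 \<le> \<beta>"
  defines "z \<equiv> complex_of_pair (\<alpha> *\<^sub>R dir_in vs j + \<beta> *\<^sub>R dir_out vs j)
               * cnj (complex_of_pair (dir_in vs j))"
  shows "0 \<le> Re z" and "0 \<le> sgn (turn vs j) * Im z"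
proof -
  let ?I = "complex_of_pair (dir_in vs j)" and ?O = "complex_of_pair (dir_out vs j)"
  have z: "z = of_real \<alpha> * (?I * cnj ?I) + of_real \<beta> * (?O * cnj ?I)"
    unfolding z_def by (simp add: complex_of_pair_add complex_of_pair_scaleR algebra_simps)
  have "Re z = \<alpha> * ((fst (dir_in vs j))\<^sup>2 + (snd (dir_in vs j))\<^sup>2)"
    using immersed_grid_corner(2)[OF assms(1,2)] unfolding z
    by (simp add: complex_of_pair_def power2_eq_square)
  then show "0 \<le> Re z" using assms(3) by simp
  have "Im z = \<beta> * turn vs j"
    unfolding z turn_def by (simp add: complex_of_pair_def algebra_simps)
  then show "0 \<le> sgn (turn vs j) * Im z"
    using assms(4) by (simp add: sgn_real_def mult_nonneg_nonpos)
qed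

definition corner_time :: "(nat \<times> nat) list \<Rightarrow> int \<Rightarrow> real" where
  "corner_time vs k = 2 * pi * real_of_int k / real (length vs)"

lemma corner_time_mono:
  "0 < length vs \<Longrightarrow> k \<le> k' \<Longrightarrow> corner_time vs k \<le> corner_time vs k'"
  unfolding corner_time_def by (intro divide_right_mono mult_left_mono) auto

lemma corner_time_succ:
  "0 < length vs \<Longrightarrow> corner_time vs (k + 1) = corner_time vs k + 2 * pi / real (length vs)"
  unfolding corner_time_def by (simp add: field_simps)

lemma pl_param_has_vector_derivative:
  fixes k :: int
  assumes m: "0 < length vs"
    and y: "corner_time vs k < y" "y < corner_time vs (k + 1)"
  shows "(pl_param vs has_vector_derivative
           (real (length vs) / (2 * pi)) *\<^sub>R dir_out vs (nat (k mod int (length vs)))) (at y)"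
proof -
  let ?m = "real (length vs)" and ?i = "nat (k mod int (length vs))"
  let ?P = "corner_pt (vs ! ?i)" and ?Q = "corner_pt (vs ! ((?i + 1) mod length vs))"
  let ?E = "{corner_time vs k <..< corner_time vs (k + 1)}"
  define L where "L z = (1 - (z * ?m / (2 * pi) - k)) *\<^sub>R ?P + (z * ?m / (2 * pi) - k) *\<^sub>R ?Q" for z
  have L_eq: "L z = pl_param vs z" if "z \<in> ?E" for z
  proof -
    have "real_of_int k < z * ?m / (2 * pi)" "z * ?m / (2 * pi) < real_of_int k + 1"
      using that m pi_gt_zero by (simp_all add: corner_time_def field_simps)
    then have "\<lfloor>z * ?m / (2 * pi)\<rfloor> = k" by linarith
    then show ?thesis unfolding pl_param_def L_def Let_def by simp
  qed
  have "(L has_vector_derivative (- (?m / (2 * pi))) *\<^sub>R ?P + (?m / (2 * pi)) *\<^sub>R ?Q) (at y)"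
    unfolding L_def by (rule derivative_eq_intros refl | simp)+
  moreover have "(- (?m / (2 * pi))) *\<^sub>R ?P + (?m / (2 * pi)) *\<^sub>R ?Q = (?m / (2 * pi)) *\<^sub>R dir_out vs ?i"
    unfolding dir_out_def by (simp add: algebra_simps)
  ultimately have "(L has_vector_derivative (?m / (2 * pi)) *\<^sub>R dir_out vs ?i) (at y)"
    by simp
  then show ?thesis
    by (rule has_vector_derivative_transform_within_open[where S = ?E]) (use y L_eq in auto)
qed

lemma smoothing_velocityE:
  assumes sm: "smoothing vs g" and m: "0 < length vs"
  obtains \<delta> where "0 < \<delta>" "\<delta> < pi / real (length vs)"
    "\<And>k \<theta>. corner_time vs k + \<delta> < \<theta> \<Longrightarrow> \<theta> < corner_time vs (k + 1) - \<delta> \<Longrightarrow>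
        vector_derivative g (at \<theta>) =
          (real (length vs) / (2 * pi)) *\<^sub>R dir_out vs (nat (k mod int (length vs)))"
    "\<And>k \<theta>. \<bar>\<theta> - corner_time vs k\<bar> < \<delta> \<Longrightarrow> \<exists>\<alpha> \<beta>. 0 \<le> \<alpha> \<and> 0 \<le> \<beta> \<and>
        vector_derivative g (at \<theta>) = \<alpha> *\<^sub>R dir_in vs (nat (k mod int (length vs)))
                                     + \<beta> *\<^sub>R dir_out vs (nat (k mod int (length vs)))"
proof -
  obtain \<delta> where \<delta>: "0 < \<delta>" "\<delta> < pi / real (length vs)"
    and flat: "\<And>\<theta>. (\<forall>k. \<delta> \<le> \<bar>\<theta> - corner_time vs k\<bar>) \<Longrightarrow> g \<theta> = pl_param vs \<theta>"
    and window: "\<And>k \<theta>. \<bar>\<theta> - corner_time vs k\<bar> < \<delta> \<Longrightarrow> \<exists>\<alpha> \<beta>. 0 \<le> \<alpha> \<and> 0 \<le> \<beta> \<and>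
        vector_derivative g (at \<theta>) = \<alpha> *\<^sub>R dir_in vs (nat (k mod int (length vs)))
                                     + \<beta> *\<^sub>R dir_out vs (nat (k mod int (length vs)))"
    using sm unfolding smoothing_def corner_time_def by metis
  show ?thesis
  proof (rule that[OF \<delta> _ window])
    fix k \<theta> assume \<theta>: "corner_time vs k + \<delta> < \<theta>" "\<theta> < corner_time vs (k + 1) - \<delta>"
    let ?E = "{corner_time vs k + \<delta> <..< corner_time vs (k + 1) - \<delta>}"
    have flat_eq: "pl_param vs y = g y" if "y \<in> ?E" for y
    proof (rule flat[symmetric], intro allI)
      fix k'
      show "\<delta> \<le> \<bar>y - corner_time vs k'\<bar>"
      proof (cases "k' \<le> k")
        case True
        then show ?thesis using that corner_time_mono[OF m True] by auto
      next
        case False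
        then show ?thesis using that corner_time_mono[OF m, of "k + 1" k'] by auto
      qed
    qed
    have "(pl_param vs has_vector_derivative
        (real (length vs) / (2 * pi)) *\<^sub>R dir_out vs (nat (k mod int (length vs)))) (at \<theta>)"
      using pl_param_has_vector_derivative[OF m, of k \<theta>] \<theta> \<delta>(1) by auto
    then have "(g has_vector_derivative
        (real (length vs) / (2 * pi)) *\<^sub>R dir_out vs (nat (k mod int (length vs)))) (at \<theta>)"
      by (rule has_vector_derivative_transform_within_open[where S = ?E]) (use \<theta> flat_eq in auto)
    then show "vector_derivative g (at \<theta>) =
        (real (length vs) / (2 * pi)) *\<^sub>R dir_out vs (nat (k mod int (length vs)))"
      by (rule vector_derivative_at)
  qed
qed

lemma continuous_on_smoothing_velocity:
  assumes "smoothing vs g"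
  shows "continuous_on S (\<lambda>\<theta>. complex_of_pair (vector_derivative g (at \<theta>)))"
proof -
  have "continuous_on UNIV (\<lambda>\<theta>. vector_derivative g (at \<theta>))"
    using assms by (simp add: smoothing_def)
  then have "continuous_on S (\<lambda>\<theta>. vector_derivative g (at \<theta>))"
    by (rule continuous_on_subset) simp
  then show ?thesis by (rule continuous_on_complex_of_pair)
qed

lemma smoothing_velocity_periodic:
  assumes "smoothing vs g"
  shows "vector_derivative g (at (\<theta> + 2 * pi)) = vector_derivative g (at \<theta>)"
proof -
  have per: "\<And>x. g (x + 2 * pi) = g x" and dif: "\<And>x. g differentiable (at x)"
    using assms by (auto simp: smoothing_def)
  let ?D = "vector_derivative g (at (\<theta> + 2 * pi))"
  have "(g has_vector_derivative ?D) (at (\<theta> + 2 * pi))"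
    using dif vector_derivative_works by blast
  moreover have "((\<lambda>x. x + 2 * pi) has_vector_derivative 1) (at \<theta>)"
    by (rule derivative_eq_intros refl | simp)+
  ultimately have "((g \<circ> (\<lambda>x. x + 2 * pi)) has_vector_derivative (1::real) *\<^sub>R ?D) (at \<theta>)"
    using vector_diff_chain_at by blast
  moreover have "g \<circ> (\<lambda>x. x + 2 * pi) = g" by (simp add: o_def per)
  ultimately show ?thesis by (simp add: vector_derivative_at)
qed

subsection \<open>Turning of the velocity\<close>

lemma quadrant_angle_eq_pi_half:
  fixes \<psi> :: "real \<Rightarrow> real"
  assumes ab: "a \<le> b" and cont: "continuous_on {a..b} \<psi>" and start: "\<psi> a = 0"
    and quadrant: "\<And>\<theta>. \<theta> \<in> {a..b} \<Longrightarrow> 0 \<le> cos (\<psi> \<theta>) \<and> 0 \<le> sin (\<psi> \<theta>)"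
    and stop: "cos (\<psi> b) = 0"
  shows "\<psi> b = pi / 2"
proof -
  have range: "0 \<le> \<psi> \<theta> \<and> \<psi> \<theta> \<le> pi / 2" if \<theta>: "\<theta> \<in> {a..b}" for \<theta>
  proof (rule ccontr)
    have cont_\<theta>: "continuous_on {a..\<theta>} \<psi>"
      using cont \<theta> by (auto intro: continuous_on_subset)
    assume "\<not> (0 \<le> \<psi> \<theta> \<and> \<psi> \<theta> \<le> pi / 2)"
    then consider "\<psi> \<theta> < 0" | "pi / 2 < \<psi> \<theta>" by linarith
    then show False
    proof cases
      case 1
      define v where "v = max (\<psi> \<theta>) (- pi / 2) / 2"
      have v: "\<psi> \<theta> \<le> v" "v \<le> \<psi> a" "- pi / 2 < v" "v < 0"
        using 1 start pi_gt_zero by (auto simp: v_def max_def)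
      then obtain x where x: "a \<le> x" "x \<le> \<theta>" "\<psi> x = v"
        using IVT2'[OF _ _ _ cont_\<theta>] \<theta> by auto
      have "0 < sin (- v)" using v by (intro sin_gt_zero) auto
      then show False using quadrant[of x] x \<theta> by auto
    next
      case 2
      define v where "v = (pi / 2 + min (\<psi> \<theta>) pi) / 2"
      have v: "\<psi> a \<le> v" "v \<le> \<psi> \<theta>" "pi / 2 < v" "v < pi"
        using 2 start pi_gt_zero by (auto simp: v_def min_def)
      then obtain x where x: "a \<le> x" "x \<le> \<theta>" "\<psi> x = v"
        using IVT'[OF _ _ _ cont_\<theta>] \<theta> by auto
      have "0 < cos (pi - v)" using v by (intro cos_gt_zero_pi) auto
      then show False using quadrant[of x] x \<theta> by auto
    qed
  qed
  have "0 \<le> \<psi> b" "\<psi> b \<le> pi / 2" using range[of b] ab by auto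
  moreover have "\<psi> b < pi / 2 \<Longrightarrow> 0 < cos (\<psi> b)"
    using \<open>0 \<le> \<psi> b\<close> by (intro cos_gt_zero_pi) auto
  ultimately show ?thesis using stop by fastforce
qed

lemma log_quarter_turn:
  fixes F :: "real \<Rightarrow> complex" and \<sigma> c :: real
  assumes ab: "a \<le> b" and cont: "continuous_on {a..b} F"
    and \<sigma>: "\<sigma> = 1 \<or> \<sigma> = -1" and c: "0 < c"
    and start: "exp (F a) = of_real c * D"
    and cone: "\<And>\<theta>. \<theta> \<in> {a..b} \<Longrightarrow> 0 \<le> Re (exp (F \<theta>) * cnj D) \<and> 0 \<le> \<sigma> * Im (exp (F \<theta>) * cnj D)"
    and stop: "Re (exp (F b) * cnj D) = 0"
  shows "Im (F b) - Im (F a) = \<sigma> * (pi / 2)"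
proof -
  define \<psi> where "\<psi> \<theta> = \<sigma> * (Im (F \<theta>) - Im (F a))" for \<theta>
  define r where "r \<theta> = exp (Re (F \<theta>) + Re (F a)) / c" for \<theta>
  have r: "0 < r \<theta>" for \<theta> using c by (simp add: r_def)
  have D: "D = exp (F a) / of_real c"
    using start c by (simp add: field_simps)
  have "exp (F \<theta>) * cnj D = exp (F \<theta> + cnj (F a)) / of_real c" for \<theta>
    by (simp add: D exp_add exp_cnj)
  then have Re: "Re (exp (F \<theta>) * cnj D) = r \<theta> * cos (\<psi> \<theta>)"
    and Im: "\<sigma> * Im (exp (F \<theta>) * cnj D) = r \<theta> * sin (\<psi> \<theta>)" for \<theta>
    using \<sigma> by (auto simp: r_def \<psi>_def Re_exp Im_exp sin_diff cos_diff)
  have "\<psi> b = pi / 2"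
  proof (rule quadrant_angle_eq_pi_half[OF ab])
    show "continuous_on {a..b} \<psi>"
      unfolding \<psi>_def by (intro continuous_intros cont)
    show "\<psi> a = 0" by (simp add: \<psi>_def)
    show "0 \<le> cos (\<psi> \<theta>) \<and> 0 \<le> sin (\<psi> \<theta>)" if "\<theta> \<in> {a..b}" for \<theta>
      using cone[OF that] r[of \<theta>] unfolding Re Im by (simp add: zero_le_mult_iff)
    show "cos (\<psi> b) = 0"
      using stop r[of b] unfolding Re by simp
  qed
  then show ?thesis using \<sigma> by (auto simp: \<psi>_def)
qed

lemma closure_adjacent_intervals:
  fixes p q r s :: real
  assumes "p < q" "q < r" "r < s"
  shows "closure ({p<..<q} \<union> {q<..<r} \<union> {r<..<s}) = {p..s}"
  using assms by auto

lemma smoothing_velocity_mid_edge: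
  fixes k :: int
  assumes sm: "smoothing vs g" and m: "0 < length vs"
  shows "vector_derivative g (at (corner_time vs k + pi / real (length vs)))
           = (real (length vs) / (2 * pi)) *\<^sub>R dir_out vs (nat (k mod int (length vs)))"
proof -
  obtain \<delta> where \<delta>: "0 < \<delta>" "\<delta> < pi / real (length vs)"
    and edge: "\<And>k \<theta>. corner_time vs k + \<delta> < \<theta> \<Longrightarrow> \<theta> < corner_time vs (k + 1) - \<delta> \<Longrightarrow>
        vector_derivative g (at \<theta>) =
          (real (length vs) / (2 * pi)) *\<^sub>R dir_out vs (nat (k mod int (length vs)))"
    using smoothing_velocityE[OF sm m] by metis
  have "2 * pi / real (length vs) = 2 * (pi / real (length vs))" by simp
  then show ?thesis
    using corner_time_succ[OF m, of k] \<delta> by (intro edge) linarith+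
qed

lemma smoothing_velocity_near_corner:
  fixes k :: int
  assumes sm: "smoothing vs g" and m: "0 < length vs"
  defines "j \<equiv> nat (k mod int (length vs))"
  obtains \<delta> where "0 < \<delta>" "\<delta> < pi / real (length vs)"
    "\<And>\<theta>. \<theta> \<in> {corner_time vs (k - 1) + \<delta> <..< corner_time vs k - \<delta>}
          \<union> {corner_time vs k - \<delta> <..< corner_time vs k + \<delta>}
          \<union> {corner_time vs k + \<delta> <..< corner_time vs (k + 1) - \<delta>} \<Longrightarrow>
        \<exists>\<alpha> \<beta>. 0 \<le> \<alpha> \<and> 0 \<le> \<beta> \<and> vector_derivative g (at \<theta>) = \<alpha> *\<^sub>R dir_in vs j + \<beta> *\<^sub>R dir_out vs j"
proof -
  let ?m = "length vs" and ?c = "real (length vs) / (2 * pi)"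
  obtain \<delta> where \<delta>: "0 < \<delta>" "\<delta> < pi / real ?m"
    and edge: "\<And>k \<theta>. corner_time vs k + \<delta> < \<theta> \<Longrightarrow> \<theta> < corner_time vs (k + 1) - \<delta> \<Longrightarrow>
        vector_derivative g (at \<theta>) = ?c *\<^sub>R dir_out vs (nat (k mod int ?m))"
    and window: "\<And>k \<theta>. \<bar>\<theta> - corner_time vs k\<bar> < \<delta> \<Longrightarrow> \<exists>\<alpha> \<beta>. 0 \<le> \<alpha> \<and> 0 \<le> \<beta> \<and>
        vector_derivative g (at \<theta>) = \<alpha> *\<^sub>R dir_in vs (nat (k mod int ?m))
                                     + \<beta> *\<^sub>R dir_out vs (nat (k mod int ?m))"
    using smoothing_velocityE[OF sm m] by metis
  have c: "0 \<le> ?c" by simp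
  show ?thesis
  proof (rule that[OF \<delta>], elim UnE)
    fix \<theta> assume "\<theta> \<in> {corner_time vs (k - 1) + \<delta> <..< corner_time vs k - \<delta>}"
    then have "vector_derivative g (at \<theta>) = ?c *\<^sub>R dir_in vs j"
      using edge[of "k - 1" \<theta>] dir_in_eq_dir_out[OF m, of k] by (simp add: j_def)
    then show "\<exists>\<alpha> \<beta>. 0 \<le> \<alpha> \<and> 0 \<le> \<beta> \<and> vector_derivative g (at \<theta>) = \<alpha> *\<^sub>R dir_in vs j + \<beta> *\<^sub>R dir_out vs j"
      using c by (intro exI[of _ ?c] exI[of _ 0]) simp
  next
    fix \<theta> assume "\<theta> \<in> {corner_time vs k - \<delta> <..< corner_time vs k + \<delta>}"
    then show "\<exists>\<alpha> \<beta>. 0 \<le> \<alpha> \<and> 0 \<le> \<beta> \<and> vector_derivative g (at \<theta>) = \<alpha> *\<^sub>R dir_in vs j + \<beta> *\<^sub>R dir_out vs j"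
      using window[of \<theta> k] unfolding j_def by auto
  next
    fix \<theta> assume "\<theta> \<in> {corner_time vs k + \<delta> <..< corner_time vs (k + 1) - \<delta>}"
    then have "vector_derivative g (at \<theta>) = ?c *\<^sub>R dir_out vs j"
      using edge[of k \<theta>] by (simp add: j_def)
    then show "\<exists>\<alpha> \<beta>. 0 \<le> \<alpha> \<and> 0 \<le> \<beta> \<and> vector_derivative g (at \<theta>) = \<alpha> *\<^sub>R dir_in vs j + \<beta> *\<^sub>R dir_out vs j"
      using c by (intro exI[of _ 0] exI[of _ ?c]) simp
  qed
qed

text \<open>The velocity lies in the closed quarter plane spanned by the incoming and outgoing
  directions on the edges and in the smoothing window, and by continuity also at the window
  boundaries.\<close>

lemma smoothing_velocity_in_corner_cone:
  fixes k :: int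
  assumes grid: "immersed_grid n vs" and sm: "smoothing vs g"
    and \<theta>: "corner_time vs (k - 1) + pi / real (length vs) \<le> \<theta>"
      "\<theta> \<le> corner_time vs k + pi / real (length vs)"
  defines "j \<equiv> nat (k mod int (length vs))"
  defines "z \<equiv> complex_of_pair (vector_derivative g (at \<theta>)) * cnj (complex_of_pair (dir_in vs j))"
  shows "0 \<le> Re z \<and> 0 \<le> sgn (turn vs j) * Im z"
proof -
  let ?m = "length vs" and ?G = "\<lambda>\<theta>. complex_of_pair (vector_derivative g (at \<theta>))"
  have m: "0 < ?m" using grid by (simp add: immersed_grid_def)
  have j: "j < ?m" using m by (simp add: j_def nat_less_iff)
  obtain \<delta> where \<delta>: "0 < \<delta>" "\<delta> < pi / real ?m"
    and comb: "\<And>\<theta>. \<theta> \<in> {corner_time vs (k - 1) + \<delta> <..< corner_time vs k - \<delta>}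
          \<union> {corner_time vs k - \<delta> <..< corner_time vs k + \<delta>}
          \<union> {corner_time vs k + \<delta> <..< corner_time vs (k + 1) - \<delta>} \<Longrightarrow>
        \<exists>\<alpha> \<beta>. 0 \<le> \<alpha> \<and> 0 \<le> \<beta> \<and> vector_derivative g (at \<theta>) = \<alpha> *\<^sub>R dir_in vs j + \<beta> *\<^sub>R dir_out vs j"
    using smoothing_velocity_near_corner[OF sm m, of k] unfolding j_def by metis
  define S where "S = {corner_time vs (k - 1) + \<delta> <..< corner_time vs k - \<delta>}
          \<union> {corner_time vs k - \<delta> <..< corner_time vs k + \<delta>}
          \<union> {corner_time vs k + \<delta> <..< corner_time vs (k + 1) - \<delta>}"
  define C where "C = {w. 0 \<le> Re (w * cnj (complex_of_pair (dir_in vs j)))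
                       \<and> 0 \<le> sgn (turn vs j) * Im (w * cnj (complex_of_pair (dir_in vs j)))}"
  have step: "corner_time vs k = corner_time vs (k - 1) + 2 * (pi / real ?m)"
    "corner_time vs (k + 1) = corner_time vs k + 2 * (pi / real ?m)"
    using corner_time_succ[OF m, of "k - 1"] corner_time_succ[OF m, of k] by simp_all
  have "closure S = {corner_time vs (k - 1) + \<delta> .. corner_time vs (k + 1) - \<delta>}"
    unfolding S_def by (rule closure_adjacent_intervals) (use step \<delta> in linarith)+
  then have "\<theta> \<in> closure S"
    using \<theta> step \<delta> by (simp only: atLeastAtMost_iff) linarith
  moreover have "closed C"
    unfolding C_def by (intro closed_Collect_conj closed_Collect_le continuous_intros)
  moreover have "?G ` S \<subseteq> C"
  proof (rule image_subsetI)
    fix t assume "t \<in> S"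
    then obtain \<alpha> \<beta> where "0 \<le> \<alpha>" "0 \<le> \<beta>"
      and "vector_derivative g (at t) = \<alpha> *\<^sub>R dir_in vs j + \<beta> *\<^sub>R dir_out vs j"
      using comb unfolding S_def by blast
    then show "?G t \<in> C"
      using corner_cone[OF grid j] unfolding C_def by simp
  qed
  moreover have "continuous_on (closure S) ?G"
    using sm by (rule continuous_on_smoothing_velocity)
  ultimately have "?G \<theta> \<in> C"
    using image_closure_subset by blast
  then show ?thesis unfolding C_def z_def by simp
qed

lemma smoothing_corner_turn:
  fixes k :: int and F :: "real \<Rightarrow> complex"
  assumes grid: "immersed_grid n vs" and sm: "smoothing vs g" and cont: "continuous_on UNIV F"
    and log: "\<And>\<theta>. complex_of_pair (vector_derivative g (at \<theta>)) = exp (F \<theta>)"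
  shows "Im (F (corner_time vs k + pi / real (length vs)))
           - Im (F (corner_time vs (k - 1) + pi / real (length vs)))
         = sgn (turn vs (nat (k mod int (length vs)))) * (pi / 2)"
proof -
  let ?m = "length vs"
  define j where "j = nat (k mod int ?m)"
  define a where "a = corner_time vs (k - 1) + pi / real ?m"
  define b where "b = corner_time vs k + pi / real ?m"
  define c where "c = real ?m / (2 * pi)"
  have m: "0 < ?m" using grid by (simp add: immersed_grid_def)
  have j: "j < ?m" using m by (simp add: j_def nat_less_iff)
  have start: "exp (F a) = of_real c * complex_of_pair (dir_in vs j)"
    using smoothing_velocity_mid_edge[OF sm m, of "k - 1"] dir_in_eq_dir_out[OF m, of k]
    by (simp add: log[symmetric] a_def c_def j_def complex_of_pair_scaleR)
  have "exp (F b) = of_real c * complex_of_pair (dir_out vs j)"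
    using smoothing_velocity_mid_edge[OF sm m, of k]
    by (simp add: log[symmetric] b_def c_def j_def complex_of_pair_scaleR)
  then have stop: "Re (exp (F b) * cnj (complex_of_pair (dir_in vs j))) = 0"
    using immersed_grid_corner(2)[OF grid j] by (simp add: mult.assoc)
  have "sgn (turn vs j) = 1 \<or> sgn (turn vs j) = -1"
    using immersed_grid_corner(1)[OF grid j] by (simp add: sgn_real_def)
  moreover have "a \<le> b"
    using corner_time_mono[OF m, of "k - 1" k] unfolding a_def b_def by simp
  moreover have "0 < c" using m by (simp add: c_def)
  moreover have "continuous_on {a..b} F" using cont by (rule continuous_on_subset) simp
  moreover have "0 \<le> Re (exp (F \<theta>) * cnj (complex_of_pair (dir_in vs j)))
      \<and> 0 \<le> sgn (turn vs j) * Im (exp (F \<theta>) * cnj (complex_of_pair (dir_in vs j)))"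
    if "\<theta> \<in> {a..b}" for \<theta>
    using smoothing_velocity_in_corner_cone[OF grid sm, of k \<theta>] that
    unfolding log a_def b_def j_def by simp
  ultimately show ?thesis
    using log_quarter_turn[OF _ _ _ _ start _ stop] unfolding a_def b_def j_def by blast
qed

subsection \<open>The rotation number of a smoothed grid curve\<close>

lemma continuous_log_shift_constant:
  fixes F :: "real \<Rightarrow> complex"
  assumes cont: "continuous_on UNIV F" and per: "\<And>\<theta>. exp (F (\<theta> + p)) = exp (F \<theta>)"
  shows "F (\<theta> + p) - F \<theta> = F (\<theta>' + p) - F \<theta>'"
proof -
  define d where "d \<theta> = F (\<theta> + p) - F \<theta>" for \<theta>
  have d_Ints: "\<exists>k::int. d \<theta> = of_real (2 * pi * k) * \<i>" for \<theta>
  proof -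
    obtain k :: int where "F (\<theta> + p) = F \<theta> + of_int (2 * k) * pi * \<i>"
      using per[of \<theta>] unfolding exp_eq by blast
    then show ?thesis unfolding d_def by (intro exI[of _ k]) simp
  qed
  have "d constant_on UNIV"
  proof (rule continuous_discrete_range_constant)
    show "continuous_on UNIV d"
      unfolding d_def by (intro continuous_intros continuous_on_compose2[OF cont]) auto
    show "\<exists>e>0. \<forall>y. y \<in> UNIV \<and> d y \<noteq> d x \<longrightarrow> e \<le> norm (d y - d x)" for x
    proof (intro exI[of _ "2 * pi"] conjI allI impI)
      fix y assume "y \<in> UNIV \<and> d y \<noteq> d x"
      moreover obtain k1 k2 :: int where "d x = of_real (2 * pi * k1) * \<i>" "d y = of_real (2 * pi * k2) * \<i>"
        using d_Ints by meson
      ultimately have "k1 \<noteq> k2" and "d y - d x = of_real (2 * pi * (k2 - k1)) * \<i>"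
        by (auto simp: algebra_simps)
      then have "1 \<le> \<bar>real_of_int (k2 - k1)\<bar>" and "norm (d y - d x) = 2 * pi * \<bar>real_of_int (k2 - k1)\<bar>"
        by (auto simp: norm_mult abs_mult simp del: of_real_mult of_int_diff)
      then show "2 * pi \<le> norm (d y - d x)"
        by simp
    qed simp
  qed simp
  then show ?thesis unfolding d_def constant_on_def by auto
qed

lemma sum_sgn_eq_card_diff:
  fixes f :: "nat \<Rightarrow> real"
  shows "(\<Sum>j<m. sgn (f j)) = real (card {j. j < m \<and> 0 < f j}) - real (card {j. j < m \<and> f j < 0})"
proof -
  have "(\<Sum>j<m. sgn (f j)) = (\<Sum>j<m. (if 0 < f j then 1 else 0) - (if f j < 0 then 1 else 0))"
    by (intro sum.cong) (auto simp: sgn_real_def)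
  then show ?thesis
    by (simp add: sum_subtractf sum.inter_filter[symmetric])
qed

lemma smoothing_rotation_lift:
  assumes grid: "immersed_grid n vs" and sm: "smoothing vs g"
  obtains F where "continuous_on UNIV F"
    "\<And>\<theta>. complex_of_pair (vector_derivative g (at \<theta>)) = exp (F \<theta>)"
    "\<And>\<theta>. Im (F (\<theta> + 2 * pi)) = Im (F \<theta>) + 2 * pi * wG vs"
proof -
  let ?m = "length vs" and ?G = "\<lambda>\<theta>. complex_of_pair (vector_derivative g (at \<theta>))"
  have m: "0 < ?m" using grid by (simp add: immersed_grid_def)
  have "vector_derivative g (at \<theta>) \<noteq> 0" for \<theta>
    using sm unfolding smoothing_def by blast
  then have nonzero: "?G \<theta> \<noteq> 0" for \<theta> by (simp add: complex_of_pair_eq_0_iff)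
  obtain F where cont: "continuous_on UNIV F" and log: "\<And>\<theta>. ?G \<theta> = exp (F \<theta>)"
    by (rule continuous_logarithm_on_simply_connected[OF continuous_on_smoothing_velocity[OF sm]
        convex_imp_simply_connected[OF convex_UNIV] locally_path_connected_UNIV nonzero]) blast
  have shift: "F (\<theta> + 2 * pi) - F \<theta> = F (\<theta>' + 2 * pi) - F \<theta>'" for \<theta> \<theta>'
    by (rule continuous_log_shift_constant[OF cont])
      (simp add: log[symmetric] smoothing_velocity_periodic[OF sm])
  define x0 where "x0 = corner_time vs (-1) + pi / real ?m"
  define f where "f i = Im (F (corner_time vs (int i - 1) + pi / real ?m))" for i :: nat
  have "f ?m - f 0 = (\<Sum>i<?m. f (Suc i) - f i)"
    by (simp add: sum_lessThan_telescope)
  also have "\<dots> = (\<Sum>i<?m. sgn (turn vs i) * (pi / 2))"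
  proof (intro sum.cong refl)
    fix i assume "i \<in> {..<?m}"
    then have "nat (int i mod int ?m) = i" by (simp add: zmod_int)
    then show "f (Suc i) - f i = sgn (turn vs i) * (pi / 2)"
      using smoothing_corner_turn[OF grid sm cont log, of "int i"] by (simp add: f_def)
  qed
  also have "\<dots> = (pi / 2) * (\<Sum>i<?m. sgn (turn vs i))"
    by (simp add: sum_distrib_left mult.commute)
  also have "\<dots> = 2 * pi * wG vs"
    by (simp add: sum_sgn_eq_card_diff wG_def ccw_corners_def cw_corners_def)
  finally have turning: "Im (F (x0 + 2 * pi)) - Im (F x0) = 2 * pi * wG vs"
    using m by (simp add: f_def x0_def corner_time_def field_simps)
  show ?thesis
  proof (rule that[OF cont log])
    fix \<theta>
    have "Im (F (\<theta> + 2 * pi)) - Im (F \<theta>) = Im (F (x0 + 2 * pi)) - Im (F x0)"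
      using arg_cong[OF shift[of \<theta> x0], of Im] by simp
    then show "Im (F (\<theta> + 2 * pi)) = Im (F \<theta>) + 2 * pi * wG vs"
      using turning by simp
  qed
qed

lemma shift_by_int_multiple:
  fixes f :: "real \<Rightarrow> real"
  assumes "\<And>\<theta>. f (\<theta> + p) = f \<theta> + c"
  shows "f (\<theta> + of_int a * p) = f \<theta> + of_int a * c"
proof (induction a arbitrary: \<theta> rule: int_induct[where k = 0])
  case (step1 i)
  have "f (\<theta> + of_int (i + 1) * p) = f ((\<theta> + of_int i * p) + p)"
    by (simp add: algebra_simps)
  also have "\<dots> = f (\<theta> + of_int i * p) + c" by (rule assms)
  also have "\<dots> = f \<theta> + of_int (i + 1) * c" using step1 by (simp add: algebra_simps)
  finally show ?case .
next
  case (step2 i)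
  have "f (\<theta> + of_int (i - 1) * p) = f ((\<theta> + of_int (i - 1) * p) + p) - c"
    using assms by simp
  also have "\<dots> = f (\<theta> + of_int i * p) - c" by (simp add: algebra_simps)
  also have "\<dots> = f \<theta> + of_int (i - 1) * c" using step2 by (simp add: algebra_simps)
  finally show ?case .
qed simp

theorem corollary1p1:
  fixes n :: nat and cyc :: "cell4 list" and gzx gwy :: "real \<Rightarrow> real \<times> real"
    and p :: "real \<Rightarrow> real \<times> real" and a b :: int
  assumes "lagrangian_hypercube n cyc"
    and "smoothing (G_zx cyc) gzx" and "smoothing (G_wy cyc) gwy"
    and "continuous_on {0..1} p"
    and "p 1 = p 0 + (2 * pi * real_of_int a, 2 * pi * real_of_int b)"
  shows "maslov_index (\<lambda>t. torus_ds gzx gwy (p t)) (\<lambda>t. torus_du gzx gwy (p t))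
         = complex_of_real (2 * real_of_int a * wG (G_zx cyc) + 2 * real_of_int b * wG (G_wy cyc))"
proof -
  have "immersed_grid n (G_zx cyc)" "immersed_grid n (G_wy cyc)"
    using assms(1) by (auto simp: lagrangian_hypercube_def lagrangian_grid_def)
  then obtain F1 F2 where
    F1: "continuous_on UNIV F1" "\<And>s. complex_of_pair (vector_derivative gzx (at s)) = exp (F1 s)"
      "\<And>s. Im (F1 (s + 2 * pi)) = Im (F1 s) + 2 * pi * wG (G_zx cyc)" and
    F2: "continuous_on UNIV F2" "\<And>u. complex_of_pair (vector_derivative gwy (at u)) = exp (F2 u)"
      "\<And>u. Im (F2 (u + 2 * pi)) = Im (F2 u) + 2 * pi * wG (G_wy cyc)"
    using smoothing_rotation_lift assms(2,3) by metis
  have diff: "\<And>s. gzx differentiable (at s)" "\<And>u. gwy differentiable (at u)"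
    using assms(2,3) unfolding smoothing_def by blast+
  define \<psi> where "\<psi> t = 2 * (Im (F1 (fst (p t))) + Im (F2 (snd (p t))))" for t
  have frame: "lag_rho (torus_ds gzx gwy (p t)) (torus_du gzx gwy (p t)) = exp (\<i> * of_real (\<psi> t))" for t
    using lag_rho_torus_frame[OF diff F1(2) F2(2)] unfolding \<psi>_def by (metis prod.collapse)
  have "continuous_on {0..1} \<psi>"
    unfolding \<psi>_def
    by (intro continuous_intros continuous_on_compose2[OF F1(1)] continuous_on_compose2[OF F2(1)]
        assms(4)) auto
  moreover have "\<psi> 1 - \<psi> 0 = 2 * pi * (2 * of_int a * wG (G_zx cyc) + 2 * of_int b * wG (G_wy cyc))"
    unfolding \<psi>_def assms(5)
    using shift_by_int_multiple[of "\<lambda>s. Im (F1 s)", OF F1(3), of "fst (p 0)" a]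
      shift_by_int_multiple[of "\<lambda>u. Im (F2 u)", OF F2(3), of "snd (p 0)" b]
    by (simp add: algebra_simps)
  ultimately show ?thesis
    unfolding maslov_index_def frame by (simp add: winding_number_exp_angle)
qed

end
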